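(* For every prime power $q$, every integer $n\ge -1$ and every integer $k$ with $-1\le k\le\frac{n-1}{2}$, $$f(n,q)\le q^{2k+2}f(n-k-1,q)+f(k,q)+\Bigl(\sum_{i=0}^k q^i\Bigr)\Bigl(\sum_{j=k}^{n-2}q^j\Bigr).$$
   Context: $\mathrm{PG}(n,q)$ is the $n$-dimensional projective space over $\mathbb F_q$. A $(2,1)$-blocking set in $\mathrm{PG}(n,q)$ is a set of lines such that every plane contains at least one of them. For $n\ge -1$, $f(n,q)$ is the smallest possible size of a $(2,1)$-blocking set in $\mathrm{PG}(n,q)$; in particular $f(-1,q)=f(0,q)=f(1,q)=0$. Empty sums are $0$. *)

theory Defs
  imports Complex_Main "HOL-Library.Function_Algebras" "HOL-Library.Cardinality"
begin

text \<open>PG(n,F) is modelled by the vector space F^(n+1), realised as the functions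
  nat => F vanishing outside the indices 0..n. A projective subspace of projective
  dimension d corresponds to a linear subspace of (vector) dimension d+1.\<close>

definition scl :: "'a::field \<Rightarrow> (nat \<Rightarrow> 'a) \<Rightarrow> nat \<Rightarrow> 'a" where
  "scl c v = (\<lambda>i. c * v i)"

definition ambient :: "int \<Rightarrow> (nat \<Rightarrow> 'a::field) set" where
  "ambient n = {v. \<forall>i. n < int i \<longrightarrow> v i = 0}"

definition lin_sub :: "int \<Rightarrow> nat \<Rightarrow> (nat \<Rightarrow> 'a::field) set \<Rightarrow> bool" where
  "lin_sub n d W \<longleftrightarrow> W \<subseteq> ambient n \<and> module.subspace scl W \<and> vector_space.dim scl W = d"

definition blocking21 :: "'a::field itself \<Rightarrow> int \<Rightarrow> (nat \<Rightarrow> 'a) set set \<Rightarrow> bool" where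
  "blocking21 _ n B \<longleftrightarrow> (\<forall>L\<in>B. lin_sub n 2 L) \<and>
     (\<forall>P::(nat \<Rightarrow> 'a) set. lin_sub n 3 P \<longrightarrow> (\<exists>L\<in>B. L \<subseteq> P))"

text \<open>f(n,q) for q = CARD('a): minimum size of a (2,1)-blocking set in PG(n,'a).\<close>
definition fPG :: "'a::{field,finite} itself \<Rightarrow> int \<Rightarrow> nat" where
  "fPG T n = (LEAST m. \<exists>B. finite B \<and> blocking21 T n B \<and> card B = m)"

end

theory Submission
  imports Defs "HOL-Library.FuncSet"
begin

text \<open>Split the coordinates of \<open>PG(N, q)\<close> into the first \<open>K + 1\<close>, spanning a subspace \<open>A\<close>,
  and the remaining ones, spanning a complementary \<open>PG(N - K - 1, q)\<close>, and pair \<open>A\<close> with the next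
  \<open>K + 1\<close> coordinates by \<open>B(x, y) = x_0 y_(K+1) + ... + x_K y_(2K+1)\<close> (here \<open>2K + 1 \<le> N\<close> is used).
  Every plane \<open>P\<close> contains a line of one of three families.  If \<open>P \<subseteq> A\<close>: a line of a smallest
  blocking set of \<open>A\<close>.  If \<open>P\<close> meets \<open>A\<close> without lying in it: \<open>P\<close> contains a point \<open>a \<in> A\<close> and a
  point \<open>w \<notin> A\<close> with \<open>B(a, w) = 0\<close>, and the lines \<open>aw\<close> of this kind are counted by choosing \<open>a\<close>,
  the component of \<open>w\<close> in \<open>A\<close> modulo \<open>a\<close>, and the projection of \<open>w\<close> as a point of the hyperplane
  \<open>B(a, -) = 0\<close> of the complement.  If \<open>P \<inter> A = 0\<close>: \<open>P\<close> projects isomorphically onto a plane of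
  the complement, which contains a line of a smallest blocking set there, and that line lifts into
  \<open>P\<close> in one of \<open>q^(2K+2)\<close> ways.\<close>

lemma (in vector_space_pair) dim_image_eq_inj_on:
  assumes "Vector_Spaces.linear s1 s2 f" and "inj_on f (vs1.span S)"
  shows "vs2.dim (f ` S) = vs1.dim S"
proof -
  interpret Vector_Spaces.linear s1 s2 f by fact
  obtain B where B: "B \<subseteq> S" "vs1.independent B" "S \<subseteq> vs1.span B" "card B = vs1.dim S"
    using vs1.basis_exists by blast
  have "vs2.independent (f ` B)"
    using B(1,2) by (intro independent_injective_image inj_on_subset[OF assms(2)] vs1.span_mono)
  moreover have "card (f ` B) = card B"
    using B(1) vs1.span_superset by (intro card_image inj_on_subset[OF assms(2)]) blast
  moreover have "f ` S \<subseteq> vs2.span (f ` B)"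
    using B(3) by (rule spans_image)
  ultimately show ?thesis
    using B by (intro vs2.dim_unique[of "f ` B"]) auto
qed

lemma (in vector_space_pair) independent_if_independent_image:
  assumes "Vector_Spaces.linear s1 s2 f" and "vs2.independent (f ` S)" and "inj_on f S"
  shows "vs1.independent S"
proof
  interpret Vector_Spaces.linear s1 s2 f by fact
  assume "vs1.dependent S"
  then obtain x where x: "x \<in> S" "x \<in> vs1.span (S - {x})"
    by (auto simp: vs1.dependent_def)
  then have "f x \<in> vs2.span (f ` (S - {x}))"
    by (simp add: span_image)
  moreover have "f ` (S - {x}) = f ` S - {f x}"
    using assms(3) x(1) by (auto simp: inj_on_def)
  ultimately show False
    using assms(2) x(1) by (auto simp: vs2.dependent_def)
qed

interpretation V: vector_space "scl :: 'a::field \<Rightarrow> (nat \<Rightarrow> 'a) \<Rightarrow> (nat \<Rightarrow> 'a)"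
  by unfold_locales (auto simp: scl_def fun_eq_iff algebra_simps)

lemma scl_apply [simp]: "scl c v i = c * v i"
  by (simp add: scl_def)

interpretation V2: vector_space_pair "scl :: 'a::field \<Rightarrow> (nat \<Rightarrow> 'a) \<Rightarrow> (nat \<Rightarrow> 'a)" scl
  by unfold_locales

lemma ambient_nat: "ambient (int K) = {v. \<forall>i>K. v i = 0}"
  by (auto simp: ambient_def)

lemma subspace_ambient: "V.subspace (ambient n)"
  by (auto simp: V.subspace_def ambient_def)

lemma ambient_mono: "m \<le> n \<Longrightarrow> ambient m \<subseteq> ambient n"
  by (auto simp: ambient_def)

lemma lin_sub_span:
  assumes "V.independent B" and "B \<subseteq> ambient n"
  shows "lin_sub n (card B) (V.span B)"
  using assms V.span_minimal[OF _ subspace_ambient]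
  by (auto simp: lin_sub_def V.dim_eq_card_independent)

lemma lin_sub_obtain_basis:
  assumes "lin_sub n d W"
  obtains B where "B \<subseteq> W" "V.independent B" "W = V.span B" "card B = d"
proof -
  obtain B where B: "B \<subseteq> W" "V.independent B" "W \<subseteq> V.span B" "card B = V.dim W"
    using V.basis_exists by blast
  moreover have "V.span B \<subseteq> W"
    using B(1) assms by (intro V.span_minimal) (auto simp: lin_sub_def)
  ultimately show ?thesis
    using that assms by (auto simp: lin_sub_def)
qed

lemma independent_pairI:
  assumes "y \<noteq> 0" and "x \<notin> V.span {y}"
  shows "V.independent {x, y}" and "x \<noteq> y"
  using assms V.independent_insertI[of x "{y}"] V.span_base[of y "{y}"] by auto

lemma lin_sub_span_pair:
  assumes "V.independent {x, y}" and "x \<noteq> y" and "x \<in> ambient n" and "y \<in> ambient n"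
  shows "lin_sub n 2 (V.span {x, y})"
proof -
  have "card {x, y} = 2"
    using assms(2) by simp
  then show ?thesis
    using lin_sub_span[of "{x, y}" n] assms by (simp add: numeral_2_eq_2)
qed

lemma pair_combination_neq_0:
  assumes "V.independent {x, y}" and "x \<noteq> y" and "r \<noteq> 0 \<or> s \<noteq> 0"
  shows "scl r x + scl s y \<noteq> 0"
proof
  assume "scl r x + scl s y = 0"
  then have sum: "(\<Sum>v\<in>{x, y}. scl (if v = x then r else s) v) = 0"
    using assms(2) by simp
  have "r = 0" "s = 0"
    using V.independentD[OF assms(1) _ order.refl sum, of x]
      V.independentD[OF assms(1) _ order.refl sum, of y] assms(2) by auto
  then show False
    using assms(3) by simp
qed

lemma exists_nontrivial_zero_combination:
  fixes \<alpha> \<beta> :: "'a::field"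
  shows "\<exists>r s. (r \<noteq> 0 \<or> s \<noteq> 0) \<and> r * \<alpha> + s * \<beta> = 0"
proof (cases "\<alpha> = 0")
  case True
  then show ?thesis by (intro exI[of _ 1] exI[of _ 0]) simp
next
  case False
  then show ?thesis by (intro exI[of _ \<beta>] exI[of _ "- \<alpha>"]) (simp add: mult.commute)
qed

lemma lin_sub_3_obtain_line:
  assumes "lin_sub n 3 P"
  obtains L where "lin_sub n 2 L" and "L \<subseteq> P"
proof -
  obtain B where B: "B \<subseteq> P" "V.independent B" "P = V.span B" "card B = 3"
    using lin_sub_obtain_basis[OF assms] .
  then obtain x y z where xyz: "B = {x, y, z}" "x \<noteq> y"
    by (metis card_3_iff)
  have P: "V.subspace P" "P \<subseteq> ambient n"
    using assms by (auto simp: lin_sub_def)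
  have xyB: "{x, y} \<subseteq> B"
    using xyz(1) by blast
  have "lin_sub n 2 (V.span {x, y})"
    using V.independent_mono[OF B(2) xyB] xyz(2) xyB B(1) P(2) by (intro lin_sub_span_pair) blast+
  moreover have "V.span {x, y} \<subseteq> P"
    using xyB B(1) by (intro V.span_minimal[OF _ P(1)]) blast
  ultimately show ?thesis
    using that by blast
qed

lemma lin_sub_3_extend:
  assumes "lin_sub n 3 P" and "a \<in> P" and "a \<noteq> 0"
  obtains v w where "v \<in> P" "w \<in> P" "V.independent {v, w}" "v \<noteq> w" "a \<notin> V.span {v, w}"
proof -
  have "{a} \<subseteq> P" and "V.independent {a}"
    using assms(2,3) V.independent_insertI[of a "{}"] by simp_all
  then obtain B where B: "{a} \<subseteq> B" "B \<subseteq> P" "V.independent B" "P \<subseteq> V.span B"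
    by (rule V.maximal_independent_subset_extend)
  have "card B = 3"
    using V.basis_card_eq_dim[OF B(2,4,3)] assms(1) by (simp add: lin_sub_def)
  then have "card (B - {a}) = 2"
    using B(1) by (simp add: card_Diff_singleton)
  then obtain v w where vw: "B - {a} = {v, w}" "v \<noteq> w"
    by (meson card_2_iff)
  have "a \<notin> V.span (B - {a})"
    using B(1,3) V.dependent_def by (metis insert_subset)
  moreover have "V.independent {v, w}"
    using V.independent_mono[OF B(3)] vw(1) by blast
  moreover have "v \<in> P" "w \<in> P"
    using vw(1) B(2) by auto
  ultimately show ?thesis
    using that vw by simp
qed

section \<open>Counting projective points\<close>

definition vecs_on :: "nat set \<Rightarrow> (nat \<Rightarrow> 'a::zero) set" where
  "vecs_on I = {v. \<forall>j. j \<notin> I \<longrightarrow> v j = 0}"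

lemma ambient_eq_vecs_on: "ambient (int K) = vecs_on {..K}"
  by (auto simp: ambient_def vecs_on_def)

lemma bij_betw_vecs_on_PiE: "bij_betw (\<lambda>v. restrict v I) (vecs_on I) (I \<rightarrow>\<^sub>E UNIV)"
  by (rule bij_betw_byWitness[where f' = "\<lambda>f j. if j \<in> I then f j else 0"])
    (auto simp: vecs_on_def fun_eq_iff PiE_def extensional_def)

lemma card_vecs_on:
  assumes "finite I"
  shows "card (vecs_on I :: (nat \<Rightarrow> 'a::{zero,finite}) set) = CARD('a) ^ card I"
proof -
  have "card (vecs_on I :: (nat \<Rightarrow> 'a) set) = card (I \<rightarrow>\<^sub>E (UNIV :: 'a set))"
    by (rule bij_betw_same_card[OF bij_betw_vecs_on_PiE])
  also have "\<dots> = CARD('a) ^ card I"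
    using assms by (simp add: card_PiE)
  finally show ?thesis .
qed

lemma finite_vecs_on:
  assumes "finite I"
  shows "finite (vecs_on I :: (nat \<Rightarrow> 'a::{zero,finite}) set)"
proof -
  have "finite (I \<rightarrow>\<^sub>E (UNIV :: 'a set))"
    using assms by (simp add: finite_PiE)
  then show ?thesis
    by (rule bij_betw_finite[OF bij_betw_vecs_on_PiE, THEN iffD2])
qed

lemma finite_ambient: "finite (ambient n :: (nat \<Rightarrow> 'a::{field,finite}) set)"
proof (rule finite_subset)
  show "ambient n \<subseteq> (vecs_on {..nat n} :: (nat \<Rightarrow> 'a) set)"
    by (auto simp: ambient_def vecs_on_def)
qed (simp add: finite_vecs_on)

definition last_nz :: "(nat \<Rightarrow> 'a::zero) \<Rightarrow> nat" where
  "last_nz v = (GREATEST i. v i \<noteq> 0)"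

lemma last_nz_eq: "v i \<noteq> 0 \<Longrightarrow> \<forall>j>i. v j = 0 \<Longrightarrow> last_nz v = i"
  unfolding last_nz_def by (rule Greatest_equality) (auto simp: not_less[symmetric])

lemma last_nz:
  assumes "v \<noteq> 0" and "v \<in> vecs_on I" and "finite I"
  shows "v (last_nz v) \<noteq> 0" and "\<forall>j>last_nz v. v j = 0" and "last_nz v \<in> I"
proof -
  obtain k where k: "v k \<noteq> 0"
    using assms(1) by (auto simp: fun_eq_iff)
  have bounded: "v j \<noteq> 0 \<Longrightarrow> j \<le> Max I" for j
    using assms(2,3) Max_ge by (fastforce simp: vecs_on_def)
  show nz: "v (last_nz v) \<noteq> 0"
    unfolding last_nz_def using k bounded by (rule GreatestI_nat)
  show "\<forall>j>last_nz v. v j = 0"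
    unfolding last_nz_def using Greatest_le_nat[of "\<lambda>i. v i \<noteq> 0", OF _ bounded] by (meson leD)
  show "last_nz v \<in> I"
    using nz assms(2) by (auto simp: vecs_on_def)
qed

text \<open>Each projective point of the coordinate subspace on \<open>I\<close> has exactly one representative in
  \<open>point_reps I\<close>: the one whose last nonzero coordinate is \<open>1\<close>.\<close>

definition point_reps :: "nat set \<Rightarrow> (nat \<Rightarrow> 'a::{zero,one}) set" where
  "point_reps I = {v \<in> vecs_on I. \<exists>i\<in>I. v i = 1 \<and> (\<forall>j>i. v j = 0)}"

lemma point_reps_last_nz:
  fixes v :: "nat \<Rightarrow> 'a::zero_neq_one"
  assumes "v \<in> point_reps I"
  shows "last_nz v \<in> I" and "v (last_nz v) = 1" and "\<forall>j>last_nz v. v j = 0"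
proof -
  obtain i where i: "i \<in> I" "v i = 1" "\<forall>j>i. v j = 0"
    using assms by (auto simp: point_reps_def)
  moreover from i have "last_nz v = i"
    by (intro last_nz_eq) auto
  ultimately show "last_nz v \<in> I" "v (last_nz v) = 1" "\<forall>j>last_nz v. v j = 0"
    by auto
qed

lemma normalize_mem_point_reps:
  fixes v :: "nat \<Rightarrow> 'a::field"
  assumes "v \<noteq> 0" and "v \<in> vecs_on I" and "finite I"
  shows "scl (1 / v (last_nz v)) v \<in> point_reps I"
    and "last_nz (scl (1 / v (last_nz v)) v) = last_nz v"
proof -
  note last = last_nz[OF assms]
  show "scl (1 / v (last_nz v)) v \<in> point_reps I"
    using last assms(2) by (auto simp: point_reps_def vecs_on_def intro!: bexI[of _ "last_nz v"])
  show "last_nz (scl (1 / v (last_nz v)) v) = last_nz v"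
    using last by (intro last_nz_eq) auto
qed

lemma finite_point_reps: "finite I \<Longrightarrow> finite (point_reps I :: (nat \<Rightarrow> 'a::{zero,one,finite}) set)"
  by (rule finite_subset[OF _ finite_vecs_on]) (auto simp: point_reps_def)

lemma point_reps_insert_greater:
  assumes "\<forall>i\<in>I. i < b"
  shows "point_reps (insert b I) = point_reps I \<union> (\<lambda>v. v(b := 1)) ` (vecs_on I :: (nat \<Rightarrow> 'a::zero_neq_one) set)"
    (is "_ = _ \<union> ?new")
proof (intro set_eqI iffI)
  fix v :: "nat \<Rightarrow> 'a"
  assume "v \<in> point_reps (insert b I)"
  then obtain i where i: "i \<in> insert b I" "v i = 1" "\<forall>j>i. v j = 0" "v \<in> vecs_on (insert b I)"
    by (auto simp: point_reps_def)
  show "v \<in> point_reps I \<union> ?new"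
  proof (cases "i = b")
    case True
    then have "v = (v(b := 0))(b := 1)" "v(b := 0) \<in> vecs_on I"
      using i by (auto simp: vecs_on_def)
    then show ?thesis by blast
  next
    case False
    then have "i \<in> I" "v b = 0"
      using i assms by auto
    then show ?thesis
      using i by (auto simp: point_reps_def vecs_on_def)
  qed
next
  fix v :: "nat \<Rightarrow> 'a"
  assume "v \<in> point_reps I \<union> ?new"
  then show "v \<in> point_reps (insert b I)"
  proof
    assume "v \<in> point_reps I"
    then show ?thesis
      by (auto simp: point_reps_def vecs_on_def)
  next
    assume "v \<in> ?new"
    then obtain u where u: "u \<in> vecs_on I" "v = u(b := 1)"
      by blast
    have "v j = 0" if "b < j" for j
      using u that assms by (simp add: vecs_on_def) (meson order.asym)
    then show ?thesis
      using u by (auto simp: point_reps_def vecs_on_def)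
  qed
qed

lemma card_point_reps:
  assumes "finite I"
  shows "card (point_reps I :: (nat \<Rightarrow> 'a::{zero_neq_one,finite}) set) = (\<Sum>j<card I. CARD('a) ^ j)"
  using assms
proof (induction I rule: finite_linorder_max_induct)
  case empty
  then show ?case by (simp add: point_reps_def)
next
  case (insert b I)
  have "b \<notin> I"
    using insert.hyps(2) by auto
  let ?new = "(\<lambda>v. v(b := 1)) ` (vecs_on I :: (nat \<Rightarrow> 'a) set)"
  have "point_reps I \<inter> ?new = {}"
    using \<open>b \<notin> I\<close> by (fastforce simp: point_reps_def vecs_on_def)
  moreover have "inj_on (\<lambda>v. v(b := 1)) (vecs_on I :: (nat \<Rightarrow> 'a) set)"
    using \<open>b \<notin> I\<close> by (auto simp: inj_on_def vecs_on_def fun_eq_iff) metis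
  ultimately have "card (point_reps (insert b I) :: (nat \<Rightarrow> 'a) set)
      = card (point_reps I :: (nat \<Rightarrow> 'a) set) + CARD('a) ^ card I"
    unfolding point_reps_insert_greater[OF insert.hyps(2)] using insert.hyps(1)
    by (simp add: card_Un_disjoint finite_point_reps finite_vecs_on card_image card_vecs_on)
  then show ?case
    using insert \<open>b \<notin> I\<close> by simp
qed

lemma fPG_attained:
  "\<exists>B. finite B \<and> blocking21 TYPE('a::{field,finite}) n B \<and> card B = fPG TYPE('a) n"
proof -
  let ?lines = "{L :: (nat \<Rightarrow> 'a) set. lin_sub n 2 L}"
  have "finite ?lines"
    by (rule finite_subset[of _ "Pow (ambient n)"]) (auto simp: lin_sub_def finite_ambient)
  moreover have "blocking21 TYPE('a) n ?lines"
    unfolding blocking21_def using lin_sub_3_obtain_line by blast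
  ultimately have "\<exists>m B. finite B \<and> blocking21 TYPE('a) n B \<and> card B = m"
    by blast
  then show ?thesis
    unfolding fPG_def by (rule LeastI_ex)
qed

lemma fPG_le_card:
  "finite B \<Longrightarrow> blocking21 TYPE('a::{field,finite}) n B \<Longrightarrow> fPG TYPE('a) n \<le> card B"
  unfolding fPG_def by (rule Least_le) blast

section \<open>Splitting the coordinates\<close>

definition head :: "nat \<Rightarrow> (nat \<Rightarrow> 'a::zero) \<Rightarrow> nat \<Rightarrow> 'a" where
  "head K v = (\<lambda>i. if i \<le> K then v i else 0)"

definition tail :: "nat \<Rightarrow> (nat \<Rightarrow> 'a) \<Rightarrow> nat \<Rightarrow> 'a" where
  "tail K v = (\<lambda>i. v (i + Suc K))"

definition shift_up :: "nat \<Rightarrow> (nat \<Rightarrow> 'a::zero) \<Rightarrow> nat \<Rightarrow> 'a" where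
  "shift_up K w = (\<lambda>i. if i \<le> K then 0 else w (i - Suc K))"

lemma linear_tail: "Vector_Spaces.linear scl scl (tail K :: (nat \<Rightarrow> 'a::field) \<Rightarrow> _)"
  by unfold_locales (auto simp: tail_def fun_eq_iff algebra_simps)

lemma tail_eq_0_iff: "tail K v = 0 \<longleftrightarrow> v \<in> ambient (int K)"
proof
  assume "tail K v = 0"
  then have "\<forall>j. v (j + Suc K) = 0"
    by (simp add: tail_def fun_eq_iff)
  then have "v i = 0" if "K < i" for i
    using that by (metis Suc_le_eq le_add_diff_inverse2)
  then show "v \<in> ambient (int K)"
    by (simp add: ambient_nat)
qed (auto simp: tail_def ambient_nat fun_eq_iff)

lemma head_add_shift_up_tail: "head K v + shift_up K (tail K v) = (v :: nat \<Rightarrow> 'a::monoid_add)"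
  by (auto simp: head_def shift_up_def tail_def fun_eq_iff)

lemma tail_add_shift_up: "a \<in> ambient (int K) \<Longrightarrow> tail K (a + shift_up K w) = (w :: nat \<Rightarrow> 'a::field)"
  by (auto simp: ambient_nat shift_up_def tail_def fun_eq_iff)

lemma head_in_ambient: "head K v \<in> ambient (int K)"
  by (auto simp: ambient_nat head_def)

lemma tail_in_ambient: "K < N \<Longrightarrow> v \<in> ambient (int N) \<Longrightarrow> tail K v \<in> ambient (int (N - K - 1))"
  by (auto simp: ambient_def tail_def)

lemma add_shift_up_in_ambient:
  "K < N \<Longrightarrow> a \<in> ambient (int K) \<Longrightarrow> w \<in> ambient (int (N - K - 1)) \<Longrightarrow> a + shift_up K w \<in> ambient (int N)"
  by (auto simp: ambient_def shift_up_def)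

interpretation tail: Vector_Spaces.linear scl scl "tail K :: (nat \<Rightarrow> 'a::field) \<Rightarrow> _" for K
  by (rule linear_tail)

definition pairing :: "nat \<Rightarrow> (nat \<Rightarrow> 'a::comm_semiring_1) \<Rightarrow> (nat \<Rightarrow> 'a) \<Rightarrow> 'a" where
  "pairing K x w = (\<Sum>j\<le>K. x j * w (Suc K + j))"

lemma pairing_cong: "(\<And>j. K < j \<Longrightarrow> w j = w' j) \<Longrightarrow> pairing K x w = pairing K x w'"
  unfolding pairing_def by (intro sum.cong) auto

lemma pairing_add_left [simp]: "pairing K (x + y) w = pairing K x w + pairing K y w"
  by (simp add: pairing_def sum.distrib algebra_simps)

lemma pairing_add_right [simp]: "pairing K x (v + w) = pairing K x v + pairing K x w"
  by (simp add: pairing_def sum.distrib algebra_simps)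

lemma pairing_scl_left [simp]: "pairing K (scl r x) w = r * pairing K x w"
  by (simp add: pairing_def sum_distrib_left algebra_simps)

lemma pairing_scl_right [simp]: "pairing K x (scl r w) = r * pairing K x w"
  by (simp add: pairing_def sum_distrib_left algebra_simps)

lemma pairing_0_right [simp]: "pairing K x 0 = 0"
  by (simp add: pairing_def)

lemma pairing_update:
  fixes x :: "nat \<Rightarrow> 'a::comm_ring_1"
  assumes "i \<le> K"
  shows "pairing K x (w(Suc K + i := c)) = pairing K x w + x i * (c - w (Suc K + i))"
proof -
  have "x j * (w(Suc K + i := c)) (Suc K + j) = x j * w (Suc K + j) + (if j = i then x i * (c - w (Suc K + i)) else 0)"
    for j
    by (cases "j = i") (simp_all add: algebra_simps)
  then show ?thesis
    using assms by (simp add: pairing_def sum.distrib)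
qed

section \<open>Lines through a point of the first summand\<close>

text \<open>In a parameter \<open>(a, g, h)\<close>, \<open>g\<close> vanishes at \<open>last_nz a\<close> so that it represents the
  \<open>A\<close>-component modulo \<open>a\<close>, and \<open>h\<close> omits the coordinate \<open>Suc K + last_nz a\<close>, which
  \<open>polar_vec\<close> then fills in so as to make the vector \<open>pairing\<close>-orthogonal to \<open>a\<close>.\<close>

definition polar_params :: "nat \<Rightarrow> nat \<Rightarrow> ((nat \<Rightarrow> 'a::field) \<times> (nat \<Rightarrow> 'a) \<times> (nat \<Rightarrow> 'a)) set" where
  "polar_params K N = (SIGMA a:point_reps {..K}.
     vecs_on ({..K} - {last_nz a}) \<times> point_reps ({Suc K..N} - {Suc K + last_nz a}))"

definition polar_vec :: "nat \<Rightarrow> (nat \<Rightarrow> 'a::field) \<Rightarrow> (nat \<Rightarrow> 'a) \<Rightarrow> (nat \<Rightarrow> 'a) \<Rightarrow> nat \<Rightarrow> 'a" where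
  "polar_vec K a g h = (g + h)(Suc K + last_nz a := - pairing K a h)"

definition polar_line :: "nat \<Rightarrow> (nat \<Rightarrow> 'a::field) \<times> (nat \<Rightarrow> 'a) \<times> (nat \<Rightarrow> 'a) \<Rightarrow> (nat \<Rightarrow> 'a) set" where
  "polar_line K = (\<lambda>(a, g, h). V.span {a, polar_vec K a g h})"

lemma card_polar_params:
  assumes "2 * K + 1 \<le> N"
  shows "card (polar_params K N :: ((nat \<Rightarrow> 'a::{field,finite}) \<times> _ \<times> _) set)
      = (\<Sum>j<K+1. CARD('a) ^ j) * (CARD('a) ^ K * (\<Sum>j<N-K-1. CARD('a) ^ j))"
    and "finite (polar_params K N :: ((nat \<Rightarrow> 'a::{field,finite}) \<times> _ \<times> _) set)"
proof -
  let ?fibre = "\<lambda>a :: nat \<Rightarrow> 'a.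
    (vecs_on ({..K} - {last_nz a}) :: (nat \<Rightarrow> 'a) set) \<times>
    (point_reps ({Suc K..N} - {Suc K + last_nz a}) :: (nat \<Rightarrow> 'a) set)"
  have fibre: "card (?fibre a) = CARD('a) ^ K * (\<Sum>j<N-K-1. CARD('a) ^ j)" "finite (?fibre a)"
    if "a \<in> point_reps {..K}" for a
  proof -
    have "last_nz a \<le> K"
      using point_reps_last_nz(1)[OF that] by simp
    then have "card ({..K} - {last_nz a}) = K" "card ({Suc K..N} - {Suc K + last_nz a}) = N - K - 1"
      using assms by (simp_all add: card_Diff_singleton)
    then show "card (?fibre a) = CARD('a) ^ K * (\<Sum>j<N-K-1. CARD('a) ^ j)" "finite (?fibre a)"
      by (simp_all add: card_cartesian_product card_vecs_on card_point_reps finite_vecs_on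
          finite_point_reps)
  qed
  have "finite (point_reps {..K} :: (nat \<Rightarrow> 'a) set)"
    by (simp add: finite_point_reps)
  then show "card (polar_params K N :: ((nat \<Rightarrow> 'a) \<times> _ \<times> _) set)
      = (\<Sum>j<K+1. CARD('a) ^ j) * (CARD('a) ^ K * (\<Sum>j<N-K-1. CARD('a) ^ j))"
    and "finite (polar_params K N :: ((nat \<Rightarrow> 'a) \<times> _ \<times> _) set)"
    using fibre card_point_reps[of "{..K}", where 'a = 'a]
    by (simp_all add: polar_params_def card_SigmaI)
qed

lemma span_singleton_in_ambient: "a \<in> ambient n \<Longrightarrow> V.span {a} \<subseteq> ambient n"
  by (simp add: V.span_minimal subspace_ambient)

lemma polar_line_lin_sub:
  assumes "2 * K + 1 \<le> N" and "p \<in> polar_params K N"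
  shows "lin_sub (int N) 2 (polar_line K p)"
proof -
  obtain a g h where p: "p = (a, g, h)"
    by (cases p)
  have a: "a \<in> point_reps {..K}" and g: "g \<in> vecs_on ({..K} - {last_nz a})"
    and h: "h \<in> point_reps ({Suc K..N} - {Suc K + last_nz a})"
    using assms(2) by (simp_all add: p polar_params_def)
  let ?v = "polar_vec K a g h"
  have a_last: "last_nz a \<le> K" "a (last_nz a) = 1"
    using point_reps_last_nz[OF a] by auto
  have h_last: "last_nz h \<in> {Suc K..N} - {Suc K + last_nz a}" "h (last_nz h) = 1"
    using point_reps_last_nz[OF h] by auto
  have a_lower: "a \<in> ambient (int K)"
    using a by (simp add: ambient_eq_vecs_on point_reps_def)
  have "?v (last_nz h) \<noteq> 0"
    using h_last g by (auto simp: polar_vec_def vecs_on_def)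
  moreover have "K < last_nz h"
    using h_last(1) by auto
  ultimately have "?v \<notin> ambient (int K)"
    by (auto simp: ambient_nat)
  then have v_indep: "?v \<notin> V.span {a}"
    using span_singleton_in_ambient[OF a_lower] by blast
  have "a \<noteq> 0"
    using a_last(2) by (metis one_neq_zero zero_fun_def)
  note indep = independent_pairI[OF this v_indep]
  have "?v \<in> ambient (int N)"
    using g h a_last(1) assms(1) by (auto simp: ambient_nat polar_vec_def vecs_on_def point_reps_def)
  moreover have "a \<in> ambient (int N)"
    using a_lower ambient_mono[of "int K" "int N"] assms(1) by auto
  ultimately have "lin_sub (int N) 2 (V.span {?v, a})"
    by (rule lin_sub_span_pair[OF indep])
  then show ?thesis
    by (simp add: p polar_line_def insert_commute)
qed

lemma polar_vec_of_parts:
  assumes "a \<in> point_reps {..K}" and "pairing K a v = 0"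
  shows "polar_vec K a (head K v) (\<lambda>j. if K < j \<and> j \<noteq> Suc K + last_nz a then v j else 0) = v"
proof -
  define i where "i = last_nz a"
  define h where "h = (\<lambda>j. if K < j \<and> j \<noteq> Suc K + i then v j else 0)"
  have i: "i \<le> K" "a i = 1"
    using point_reps_last_nz[OF assms(1)] by (auto simp: i_def)
  have "pairing K a v = pairing K a (h(Suc K + i := v (Suc K + i)))"
    by (rule pairing_cong) (simp add: h_def)
  also have "\<dots> = pairing K a h + v (Suc K + i)"
    using pairing_update[OF i(1), of a h "v (Suc K + i)"] i(2) by (simp add: h_def)
  finally have "- pairing K a h = v (Suc K + i)"
    using assms(2) by (simp add: neg_eq_iff_add_eq_0)
  then show ?thesis
    by (auto simp: polar_vec_def fun_eq_iff head_def h_def i_def[symmetric])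
qed

lemma polar_line_through_point_rep:
  assumes P: "V.subspace P" "P \<subseteq> ambient (int N)"
    and a: "a \<in> point_reps {..K}" "a \<in> P"
    and w: "w \<in> P" "w \<notin> ambient (int K)" "w (last_nz a) = 0" "pairing K a w = 0"
  shows "\<exists>p\<in>polar_params K N. polar_line K p \<subseteq> P"
proof -
  define i where "i = last_nz a"
  define upper where "upper v = (\<lambda>j. if K < j \<and> j \<noteq> Suc K + i then v j else (0 :: 'a))" for v
  have w_parts: "polar_vec K a (head K w) (upper w) = w"
    using polar_vec_of_parts[OF a(1) w(4)] by (simp add: i_def upper_def)
  have upper_nz: "upper w \<noteq> 0"
  proof
    assume "upper w = 0"
    then have "w j = 0" if "K < j" for j
      using that fun_cong[OF w_parts, of j] by (auto simp: polar_vec_def head_def i_def split: if_splits)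
    then show False
      using w(2) by (auto simp: ambient_nat)
  qed
  have upper_vecs: "upper w \<in> vecs_on ({Suc K..N} - {Suc K + i})"
    using w(1) P(2) by (auto simp: upper_def vecs_on_def ambient_nat)
  define v where "v = scl (1 / upper w (last_nz (upper w))) w"
  have "upper v = scl (1 / upper w (last_nz (upper w))) (upper w)"
    by (simp add: upper_def v_def fun_eq_iff)
  then have h: "upper v \<in> point_reps ({Suc K..N} - {Suc K + i})"
    using normalize_mem_point_reps(1)[OF upper_nz upper_vecs] by simp
  have g: "head K v \<in> vecs_on ({..K} - {i})"
    using w(3) by (auto simp: head_def v_def vecs_on_def i_def)
  have "polar_vec K a (head K v) (upper v) = v"
    using polar_vec_of_parts[OF a(1)] w(4) by (simp add: i_def upper_def v_def)
  moreover have "v \<in> P"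
    unfolding v_def using P(1) w(1) by (rule V.subspace_scale)
  ultimately have "polar_line K (a, head K v, upper v) \<subseteq> P"
    unfolding polar_line_def using V.span_minimal[OF _ P(1), of "{a, v}"] a(2) by simp
  moreover have "(a, head K v, upper v) \<in> polar_params K N"
    using a(1) g h by (simp add: polar_params_def i_def)
  ultimately show ?thesis
    by blast
qed

lemma polar_line_through:
  assumes P: "V.subspace P" "P \<subseteq> ambient (int N)"
    and a: "a \<in> P" "a \<in> ambient (int K)" "a \<noteq> 0"
    and w: "w \<in> P" "w \<notin> ambient (int K)" and orth: "pairing K a w = 0"
  shows "\<exists>p\<in>polar_params K N. polar_line K p \<subseteq> P"
proof -
  define i where "i = last_nz a"
  define a1 where "a1 = scl (1 / a i) a"
  have a1: "a1 \<in> point_reps {..K}" "last_nz a1 = i"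
    using normalize_mem_point_reps[OF a(3), of "{..K}"] a(2)
    by (simp_all add: a1_def i_def ambient_eq_vecs_on)
  have a1_last: "a1 i = 1" "\<forall>j>K. a1 j = 0"
    using point_reps_last_nz[OF a1(1)] by (auto simp: a1(2))
  define w1 where "w1 = w - scl (w i) a1"
  have "a1 \<in> P" "w1 \<in> P"
    unfolding w1_def a1_def using P(1) a(1) w(1) by (auto intro: V.subspace_diff V.subspace_scale)
  moreover have w1_upper: "w1 j = w j" if "K < j" for j
    using that a1_last by (simp add: w1_def)
  then have "w1 \<notin> ambient (int K)"
    using w(2) by (auto simp: ambient_nat)
  moreover have "w1 (last_nz a1) = 0"
    using a1_last by (simp add: w1_def a1(2))
  moreover have "pairing K a1 w1 = 0"
    using w1_upper orth by (simp add: pairing_cong[of K w1 w] a1_def)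
  ultimately show ?thesis
    using polar_line_through_point_rep[OF P a1(1)] by blast
qed

lemma plane_meeting_lower_contains_polar_line:
  assumes P: "lin_sub (int N) 3 P"
    and a: "a \<in> P" "a \<in> ambient (int K)" "a \<noteq> 0" and v: "v \<in> P" "v \<notin> ambient (int K)"
  shows "\<exists>p\<in>polar_params K N. polar_line K p \<subseteq> P"
proof -
  have sP: "V.subspace P" "P \<subseteq> ambient (int N)"
    using P by (auto simp: lin_sub_def)
  obtain v1 v2 where vs: "v1 \<in> P" "v2 \<in> P" "V.independent {v1, v2}" "v1 \<noteq> v2" "a \<notin> V.span {v1, v2}"
    using lin_sub_3_extend[OF P a(1,3)] .
  obtain c1 c2 where c: "c1 \<noteq> 0 \<or> c2 \<noteq> 0" "c1 * pairing K a v1 + c2 * pairing K a v2 = 0"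
    using exists_nontrivial_zero_combination by blast
  define w where "w = scl c1 v1 + scl c2 v2"
  have w: "w \<in> P" "pairing K a w = 0" "w \<noteq> 0"
    unfolding w_def using sP(1) vs c pair_combination_neq_0
    by (auto intro: V.subspace_add V.subspace_scale)
  show ?thesis
  proof (cases "w \<in> ambient (int K)")
    case False
    show ?thesis
      by (rule polar_line_through[OF sP a w(1) False w(2)])
  next
    case True
    txt \<open>A suitable combination of \<open>a\<close> and \<open>w\<close> is then a point of \<open>A\<close> orthogonal to \<open>v\<close>.\<close>
    obtain d1 d2 where d: "d1 \<noteq> 0 \<or> d2 \<noteq> 0" "d1 * pairing K a v + d2 * pairing K w v = 0"
      using exists_nontrivial_zero_combination by blast
    define a' where "a' = scl d1 a + scl d2 w"
    have "w \<in> V.span {v1, v2}"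
      unfolding w_def by (intro V.span_add V.span_scale V.span_base) auto
    then have "a \<notin> V.span {w}"
      using vs(5) V.span_mono[of "{w}" "V.span {v1, v2}"] by (auto simp: V.span_span)
    note indep = independent_pairI[OF w(3) this]
    have "a' \<in> P" "a' \<in> ambient (int K)" "a' \<noteq> 0" "pairing K a' v = 0"
      unfolding a'_def using sP(1) a w True d subspace_ambient pair_combination_neq_0[OF indep d(1)]
      by (auto intro: V.subspace_add V.subspace_scale)
    then show ?thesis
      using polar_line_through[OF sP _ _ _ v] by blast
  qed
qed

section \<open>Lines lifted from the complement\<close>

definition basis_pair :: "(nat \<Rightarrow> 'a::field) set \<Rightarrow> (nat \<Rightarrow> 'a) \<times> (nat \<Rightarrow> 'a)" where
  "basis_pair L = (SOME (x, y). V.independent {x, y} \<and> x \<noteq> y \<and> L = V.span {x, y})"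

lemma basis_pair:
  assumes "lin_sub n 2 L" and "basis_pair L = (x, y)"
  shows "V.independent {x, y}" and "x \<noteq> y" and "L = V.span {x, y}"
proof -
  obtain B where B: "V.independent B" "L = V.span B" "card B = 2"
    using lin_sub_obtain_basis[OF assms(1)] by metis
  then obtain u v where "B = {u, v}" "u \<noteq> v"
    by (meson card_2_iff)
  then have "\<exists>p. (\<lambda>(x, y). V.independent {x, y} \<and> x \<noteq> y \<and> L = V.span {x, y}) p"
    using B by (intro exI[of _ "(u, v)"]) simp
  then have "(\<lambda>(x, y). V.independent {x, y} \<and> x \<noteq> y \<and> L = V.span {x, y}) (basis_pair L)"
    unfolding basis_pair_def by (rule someI_ex)
  then show "V.independent {x, y}" "x \<noteq> y" "L = V.span {x, y}"
    using assms(2) by simp_all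
qed

definition lifted_line :: "nat \<Rightarrow> (nat \<Rightarrow> 'a::field) set \<times> (nat \<Rightarrow> 'a) \<times> (nat \<Rightarrow> 'a) \<Rightarrow> (nat \<Rightarrow> 'a) set" where
  "lifted_line K = (\<lambda>(L, a1, a2). case basis_pair L of (b1, b2) \<Rightarrow>
     V.span {a1 + shift_up K b1, a2 + shift_up K b2})"

lemma lifted_line_lin_sub:
  assumes "K < N" and L: "lin_sub (int (N - K - 1)) 2 L"
    and a: "a1 \<in> ambient (int K)" "a2 \<in> ambient (int K)"
  shows "lin_sub (int N) 2 (lifted_line K (L, a1, a2))"
proof -
  obtain b1 b2 where b: "basis_pair L = (b1, b2)"
    by (cases "basis_pair L")
  note basis = basis_pair[OF L b]
  define x1 where "x1 = a1 + shift_up K b1"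
  define x2 where "x2 = a2 + shift_up K b2"
  have tails: "tail K x1 = b1" "tail K x2 = b2"
    using a by (simp_all add: x1_def x2_def tail_add_shift_up)
  then have "x1 \<noteq> x2"
    using basis(2) by auto
  have "V.independent (tail K ` {x1, x2})"
    using basis(1) tails by simp
  moreover have "inj_on (tail K) {x1, x2}"
    using tails basis(2) by (auto simp: inj_on_def)
  ultimately have "V.independent {x1, x2}"
    by (rule V2.independent_if_independent_image[OF linear_tail])
  moreover have "b1 \<in> ambient (int (N - K - 1))" "b2 \<in> ambient (int (N - K - 1))"
    using L basis(3) V.span_base[of _ "{b1, b2}"] by (auto simp: lin_sub_def)
  then have "x1 \<in> ambient (int N)" "x2 \<in> ambient (int N)"
    using a assms(1) by (simp_all add: x1_def x2_def add_shift_up_in_ambient)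
  ultimately show ?thesis
    using lin_sub_span_pair \<open>x1 \<noteq> x2\<close> by (simp add: lifted_line_def b x1_def x2_def)
qed

lemma plane_avoiding_lower_contains_lifted_line:
  assumes "K < N" and BC: "blocking21 TYPE('a::field) (int (N - K - 1)) BC"
    and P: "lin_sub (int N) 3 (P :: (nat \<Rightarrow> 'a) set)" and avoid: "P \<inter> ambient (int K) \<subseteq> {0}"
  shows "\<exists>p\<in>BC \<times> ambient (int K) \<times> ambient (int K). lifted_line K p \<subseteq> P"
proof -
  have sP: "V.subspace P" "P \<subseteq> ambient (int N)" "V.dim P = 3"
    using P by (auto simp: lin_sub_def)
  have "V.span P = P"
    using sP(1) by (simp add: V.span_eq_iff)
  moreover have "inj_on (tail K) P"
    using avoid sP(1) by (auto simp: tail.inj_on_iff_eq_0 tail_eq_0_iff)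
  ultimately have "V.dim (tail K ` P) = 3"
    using V2.dim_image_eq_inj_on[OF linear_tail, of K P] sP(3) by metis
  moreover have "tail K ` P \<subseteq> ambient (int (N - K - 1))"
    using sP(2) tail_in_ambient[OF assms(1)] by blast
  ultimately have "lin_sub (int (N - K - 1)) 3 (tail K ` P)"
    using tail.subspace_image[OF sP(1)] by (simp add: lin_sub_def)
  then obtain L where L: "L \<in> BC" "L \<subseteq> tail K ` P"
    using BC by (auto simp: blocking21_def)
  obtain b1 b2 where b: "basis_pair L = (b1, b2)"
    by (cases "basis_pair L")
  have "b1 \<in> L" "b2 \<in> L"
    using basis_pair(3)[OF _ b] BC L(1) V.span_base[of _ "{b1, b2}"] by (auto simp: blocking21_def)
  then obtain x1 x2 where x: "x1 \<in> P" "x2 \<in> P" "tail K x1 = b1" "tail K x2 = b2"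
    using L(2) by blast
  have "lifted_line K (L, head K x1, head K x2) = V.span {x1, x2}"
    using x head_add_shift_up_tail[of K x1] head_add_shift_up_tail[of K x2]
    by (simp add: lifted_line_def b)
  moreover have "V.span {x1, x2} \<subseteq> P"
    using V.span_minimal[OF _ sP(1), of "{x1, x2}"] x by simp
  moreover have "(L, head K x1, head K x2) \<in> BC \<times> ambient (int K) \<times> ambient (int K)"
    using L(1) by (simp add: head_in_ambient)
  ultimately show ?thesis
    by metis
qed

lemma construction_lin_sub:
  assumes N: "2 * K + 1 \<le> N" and BA: "blocking21 TYPE('a::field) (int K) BA"
    and BC: "blocking21 TYPE('a) (int (N - K - 1)) BC"
    and L: "L \<in> BA \<union> polar_line K ` polar_params K N \<union> lifted_line K ` (BC \<times> ambient (int K) \<times> ambient (int K))"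
  shows "lin_sub (int N) 2 L"
  using L
proof (elim UnE imageE)
  assume "L \<in> BA"
  then show ?thesis
    using BA ambient_mono[of "int K" "int N"] N by (auto simp: blocking21_def lin_sub_def)
next
  fix p
  assume "L = polar_line K p" "p \<in> polar_params K N"
  then show ?thesis
    using polar_line_lin_sub[OF N] by simp
next
  fix p
  assume "L = lifted_line K p" "p \<in> BC \<times> ambient (int K) \<times> ambient (int K)"
  then show ?thesis
    using lifted_line_lin_sub[of K N] BC N by (auto simp: blocking21_def)
qed

lemma blocking21_construction:
  assumes N: "2 * K + 1 \<le> N" and BA: "blocking21 TYPE('a::field) (int K) BA"
    and BC: "blocking21 TYPE('a) (int (N - K - 1)) BC"
  shows "blocking21 TYPE('a) (int N)
    (BA \<union> polar_line K ` polar_params K N \<union> lifted_line K ` (BC \<times> ambient (int K) \<times> ambient (int K)))"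
  unfolding blocking21_def
proof (intro conjI ballI allI impI)
  show "lin_sub (int N) 2 L"
    if "L \<in> BA \<union> polar_line K ` polar_params K N \<union> lifted_line K ` (BC \<times> ambient (int K) \<times> ambient (int K))"
    for L
    using construction_lin_sub[OF N BA BC that] .
next
  fix P :: "(nat \<Rightarrow> 'a) set"
  assume P: "lin_sub (int N) 3 P"
  consider (lower) "P \<subseteq> ambient (int K)"
    | (meeting) a v where "a \<in> P" "a \<in> ambient (int K)" "a \<noteq> 0" "v \<in> P" "v \<notin> ambient (int K)"
    | (avoiding) "P \<inter> ambient (int K) \<subseteq> {0}"
    by blast
  then show "\<exists>L\<in>BA \<union> polar_line K ` polar_params K N \<union>
      lifted_line K ` (BC \<times> ambient (int K) \<times> ambient (int K)). L \<subseteq> P"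
  proof cases
    case lower
    then have "lin_sub (int K) 3 P"
      using P by (simp add: lin_sub_def)
    then obtain L where "L \<in> BA" "L \<subseteq> P"
      using BA unfolding blocking21_def by blast
    then show ?thesis
      by blast
  next
    case meeting
    then obtain p where "p \<in> polar_params K N" "polar_line K p \<subseteq> P"
      using plane_meeting_lower_contains_polar_line[OF P] by blast
    then show ?thesis
      by (intro bexI[of _ "polar_line K p"]) auto
  next
    case avoiding
    then obtain p where "p \<in> BC \<times> ambient (int K) \<times> ambient (int K)" "lifted_line K p \<subseteq> P"
      using plane_avoiding_lower_contains_lifted_line[OF _ BC P] N by auto
    then show ?thesis
      by (intro bexI[of _ "lifted_line K p"]) auto
  qed
qed

lemma fPG_recursive_bound:
  assumes N: "2 * K + 1 \<le> N"
  shows "fPG TYPE('a::{field,finite}) (int N)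
    \<le> CARD('a) ^ (2 * K + 2) * fPG TYPE('a) (int (N - K - 1)) + fPG TYPE('a) (int K)
      + (\<Sum>j<K+1. CARD('a) ^ j) * (CARD('a) ^ K * (\<Sum>j<N-K-1. CARD('a) ^ j))"
proof -
  obtain BA where BA: "finite BA" "blocking21 TYPE('a) (int K) BA" "card BA = fPG TYPE('a) (int K)"
    using fPG_attained by blast
  obtain BC where BC: "finite BC" "blocking21 TYPE('a) (int (N - K - 1)) BC"
    "card BC = fPG TYPE('a) (int (N - K - 1))"
    using fPG_attained by blast
  let ?A = "ambient (int K) :: (nat \<Rightarrow> 'a) set"
  let ?polar = "polar_line K ` (polar_params K N :: ((nat \<Rightarrow> 'a) \<times> _ \<times> _) set)"
  let ?lifted = "lifted_line K ` (BC \<times> ?A \<times> ?A)"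
  have card_A: "card ?A = CARD('a) ^ (K + 1)" and finite_A: "finite ?A"
    by (simp_all add: ambient_eq_vecs_on card_vecs_on finite_vecs_on)
  have "card ?polar \<le> (\<Sum>j<K+1. CARD('a) ^ j) * (CARD('a) ^ K * (\<Sum>j<N-K-1. CARD('a) ^ j))"
    using card_image_le[OF card_polar_params(2)[OF N]] card_polar_params(1)[OF N] by metis
  moreover have "card ?lifted \<le> CARD('a) ^ (2 * K + 2) * card BC"
  proof -
    have "card ?lifted \<le> card BC * (card ?A * card ?A)"
      using card_image_le[of "BC \<times> ?A \<times> ?A" "lifted_line K"] BC(1) finite_A
      by (simp add: card_cartesian_product)
    also have "card ?A * card ?A = CARD('a) ^ (2 * K + 2)"
      unfolding card_A power_add[symmetric] by (simp add: mult_2)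
    finally show ?thesis
      by (simp add: mult.commute)
  qed
  moreover have "fPG TYPE('a) (int N) \<le> card (BA \<union> ?polar \<union> ?lifted)"
    using BA(1) BC(1) finite_A card_polar_params(2)[OF N]
    by (intro fPG_le_card blocking21_construction[OF N BA(2) BC(2)]) auto
  moreover have "card (BA \<union> ?polar \<union> ?lifted) \<le> card BA + card ?polar + card ?lifted"
    by (meson add_le_mono card_Un_le le_trans order.refl)
  ultimately show ?thesis
    unfolding BA(3) BC(3) by linarith
qed

lemma sum_power_nat_atLeastAtMost_int:
  "(\<Sum>i\<in>{0..int K}. (q::int) ^ nat i) = (\<Sum>j<K+1. q ^ j)"
  by (rule sum.reindex_bij_witness[of _ int nat]) auto

lemma sum_power_nat_atLeastAtMost_int_shift:
  assumes "K + 1 \<le> N"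
  shows "(\<Sum>j\<in>{int K..int N - 2}. (q::int) ^ nat j) = q ^ K * (\<Sum>j<N-K-1. q ^ j)"
proof -
  have "(\<Sum>j\<in>{int K..int N - 2}. q ^ nat j) = (\<Sum>i<N-K-1. q ^ (K + i))"
    by (rule sum.reindex_bij_witness[of _ "\<lambda>i. int (K + i)" "\<lambda>j. nat j - K"]) (use assms in auto)
  also have "\<dots> = q ^ K * (\<Sum>j<N-K-1. q ^ j)"
    by (simp add: power_add sum_distrib_left)
  finally show ?thesis .
qed

theorem proposition3p32:
  fixes n k :: int
  assumes "-1 \<le> n" and "-1 \<le> k" and "2 * k \<le> n - 1"
  shows "int (fPG TYPE('a::{field,finite}) n)
    \<le> int (CARD('a)) ^ nat (2 * k + 2) * int (fPG TYPE('a) (n - k - 1))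
       + int (fPG TYPE('a) k)
       + (\<Sum>i\<in>{0..k}. int (CARD('a)) ^ nat i) * (\<Sum>j\<in>{k..n - 2}. int (CARD('a)) ^ nat j)"
proof (cases "k = -1")
  case True
  then show ?thesis by simp
next
  case False
  define K N where "K = nat k" and "N = nat n"
  have KN: "k = int K" "n = int N"
    using False assms by (auto simp: K_def N_def)
  then have N: "2 * K + 1 \<le> N"
    using assms(3) by linarith
  have e: "n - k - 1 = int (N - K - 1)" "nat (2 * k + 2) = 2 * K + 2"
    using KN N by auto
  show ?thesis
    using of_nat_mono[OF fPG_recursive_bound[OF N, where 'a = 'a], where 'a = int] N
    unfolding e unfolding KN
    by (simp add: sum_power_nat_atLeastAtMost_int sum_power_nat_atLeastAtMost_int_shift)
qed

end
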